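(* Let $K$ and $L$ be $n$-element finite sets, $M=K\times L$, and let $u=(u_{kl})_{k\in K,l\in L}$ be a unitary matrix all of whose entries $u_{kl}$ are nonzero. Then the maps $C_u,D_u:F(M)\to\operatorname{End}F(K)$ are unitary isomorphisms of the Hermitian vector spaces $(F(M),\langle\cdot,\cdot\rangle_u)$ and $(\operatorname{End}F(K),\langle\cdot,\cdot\rangle_{HS})$.
   Context: For a finite set $J$, $F(J)$ denotes the space of complex-valued functions on $J$. For $f=(f_{kl})\in F(M)$, $C_uf$ and $D_uf$ are the operators on $F(K)$ whose matrices $(x_{kk'})$ and $(y_{kk'})$ (with respect to the standard basis of delta functions) are $x_{kk'}=\sum_{l\in L}u_{kl}f_{kl}\bar u_{k'l}$ and $y_{kk'}=\sum_{l\in L}u_{kl}f_{k'l}\bar u_{k'l}$. The Hermitian product on $F(M)$ is $\langle f,g\rangle_u=\sum_{k\in K,l\in L}f_{kl}\bar g_{kl}|u_{kl}|^2$, and on $\operatorname{End}F(K)$ the Hilbert–Schmidt product is $\langle X,Y\rangle_{HS}=\operatorname{tr}XY^*=\sum_{k,k'}x_{kk'}\bar y_{kk'}$ where $(x_{kk'}),(y_{kk'})$ are the matrices of $X,Y$. *)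

theory Defs
  imports Complex_Main
begin

text \<open>F(M) with M = K x L is modelled as 'k => 'l => complex; an element of End F(K)
  is represented by its matrix w.r.t. the delta basis, i.e. 'k => 'k => complex.\<close>

definition unitary_mat :: "('k::finite \<Rightarrow> 'l::finite \<Rightarrow> complex) \<Rightarrow> bool" where
  "unitary_mat u \<longleftrightarrow>
     (\<forall>k k'. (\<Sum>l\<in>UNIV. u k l * cnj (u k' l)) = (if k = k' then 1 else 0)) \<and>
     (\<forall>l l'. (\<Sum>k\<in>UNIV. cnj (u k l) * u k l') = (if l = l' then 1 else 0))"

definition C_op :: "('k::finite \<Rightarrow> 'l::finite \<Rightarrow> complex) \<Rightarrow> ('k \<Rightarrow> 'l \<Rightarrow> complex) \<Rightarrow> ('k \<Rightarrow> 'k \<Rightarrow> complex)" where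
  "C_op u f = (\<lambda>k k'. \<Sum>l\<in>UNIV. u k l * f k l * cnj (u k' l))"

definition D_op :: "('k::finite \<Rightarrow> 'l::finite \<Rightarrow> complex) \<Rightarrow> ('k \<Rightarrow> 'l \<Rightarrow> complex) \<Rightarrow> ('k \<Rightarrow> 'k \<Rightarrow> complex)" where
  "D_op u f = (\<lambda>k k'. \<Sum>l\<in>UNIV. u k l * f k' l * cnj (u k' l))"

definition inner_u :: "('k::finite \<Rightarrow> 'l::finite \<Rightarrow> complex) \<Rightarrow> ('k \<Rightarrow> 'l \<Rightarrow> complex) \<Rightarrow> ('k \<Rightarrow> 'l \<Rightarrow> complex) \<Rightarrow> complex" where
  "inner_u u f g = (\<Sum>k\<in>UNIV. \<Sum>l\<in>UNIV. f k l * cnj (g k l) * complex_of_real ((cmod (u k l))\<^sup>2))"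

definition inner_HS :: "('k::finite \<Rightarrow> 'k \<Rightarrow> complex) \<Rightarrow> ('k \<Rightarrow> 'k \<Rightarrow> complex) \<Rightarrow> complex" where
  "inner_HS X Y = (\<Sum>k\<in>UNIV. \<Sum>k'\<in>UNIV. X k k' * cnj (Y k k'))"

definition unitary_iso :: "(('k::finite \<Rightarrow> 'l::finite \<Rightarrow> complex) \<Rightarrow> ('k \<Rightarrow> 'k \<Rightarrow> complex))
   \<Rightarrow> (('k \<Rightarrow> 'l \<Rightarrow> complex) \<Rightarrow> ('k \<Rightarrow> 'l \<Rightarrow> complex) \<Rightarrow> complex)
   \<Rightarrow> (('k \<Rightarrow> 'k \<Rightarrow> complex) \<Rightarrow> ('k \<Rightarrow> 'k \<Rightarrow> complex) \<Rightarrow> complex) \<Rightarrow> bool" where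
  "unitary_iso T ip1 ip2 \<longleftrightarrow>
     (\<forall>a f g. T (\<lambda>k l. a * f k l + g k l) = (\<lambda>k k'. a * T f k k' + T g k k')) \<and>
     bij T \<and>
     (\<forall>f g. ip2 (T f) (T g) = ip1 f g)"

end

theory Submission
  imports Defs
begin

text \<open>Row k of the matrix of \<open>C\<^sub>u f\<close> is the vector \<open>(u\<^sub>k\<^sub>l f\<^sub>k\<^sub>l)\<^sub>l\<close>
  multiplied by the unitary matrix \<open>u\<^sup>*\<close>; hence its squared norm is
  \<open>\<Sum>\<^sub>l |u\<^sub>k\<^sub>l|\<^sup>2 |f\<^sub>k\<^sub>l|\<^sup>2\<close>, and since all \<open>u\<^sub>k\<^sub>l\<close> are nonzero, \<open>f\<close> is recovered
  from \<open>C\<^sub>u f\<close> by multiplying with \<open>u\<close> and dividing entrywise by \<open>u\<^sub>k\<^sub>l\<close>.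
  The map \<open>D\<^sub>u\<close> reduces to this case: \<open>D\<^sub>u f\<close> is the transpose of \<open>C\<^sub>u\<^sub>\<dagger> f\<close>,
  where \<open>u\<^sub>\<dagger>\<close> is the entrywise conjugate of \<open>u\<close>, and transposition is a unitary
  involution of the Hilbert--Schmidt space.\<close>

lemma sum_mult_delta:
  "(\<Sum>j\<in>(UNIV :: 'a::finite set). x j * (if j = i then 1 else 0)) = (x i :: complex)"
  by (simp add: if_distrib cong: if_cong)

lemma sum_rotate3:
  "(\<Sum>a\<in>A. \<Sum>b\<in>B. \<Sum>c\<in>C. F a b c) = (\<Sum>b\<in>B. \<Sum>c\<in>C. \<Sum>a\<in>A. (F a b c :: 'x::comm_monoid_add))"
  by (subst sum.swap) (simp add: sum.swap[of _ A C])

lemma unitary_mat_cnj: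
  assumes "unitary_mat u"
  shows "unitary_mat (\<lambda>k l. cnj (u k l))"
proof -
  have "(\<Sum>l\<in>UNIV. cnj (u k l) * cnj (cnj (u k' l))) = cnj (\<Sum>l\<in>UNIV. u k l * cnj (u k' l))"
    for k k'
    by simp
  moreover have "(\<Sum>k\<in>UNIV. cnj (cnj (u k l)) * cnj (u k l')) = cnj (\<Sum>k\<in>UNIV. cnj (u k l) * u k l')"
    for l l'
    by (simp add: mult.commute)
  ultimately show ?thesis
    using assms unfolding unitary_mat_def by simp
qed

lemma inner_u_cnj: "inner_u (\<lambda>k l. cnj (u k l)) = inner_u u"
  unfolding inner_u_def by simp

lemma inner_HS_transpose:
  "inner_HS (\<lambda>k k'. X k' k) (\<lambda>k k'. Y k' k) = inner_HS X Y"
  unfolding inner_HS_def by (rule sum.swap)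

lemma D_op_eq_transpose_C_op:
  "D_op u f = (\<lambda>k k'. C_op (\<lambda>k l. cnj (u k l)) f k' k)"
  unfolding D_op_def C_op_def by (simp add: mult_ac)

lemma bij_transpose: "bij (\<lambda>X k k'. X k' k)"
  by (rule o_bij[where g = "\<lambda>X k k'. X k' k"]) auto

lemma unitary_iso_transpose:
  assumes "unitary_iso T ip inner_HS"
  shows "unitary_iso (\<lambda>f k k'. T f k' k) ip inner_HS"
proof -
  from assms have linear: "\<forall>a f g. T (\<lambda>k l. a * f k l + g k l) = (\<lambda>k k'. a * T f k k' + T g k k')"
    and "bij T" and isometric: "\<forall>f g. inner_HS (T f) (T g) = ip f g"
    unfolding unitary_iso_def by blast+
  have "bij ((\<lambda>X k k'. X k' k) \<circ> T)"
    using \<open>bij T\<close> bij_transpose by (rule bij_comp)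
  moreover have "inner_HS (\<lambda>k k'. T f k' k) (\<lambda>k k'. T g k' k) = ip f g" for f g
    using isometric inner_HS_transpose[of "T f" "T g"] by simp
  ultimately show ?thesis
    using linear unfolding unitary_iso_def comp_def by simp
qed

lemma C_op_linear:
  "C_op u (\<lambda>k l. a * f k l + g k l) = (\<lambda>k k'. a * C_op u f k k' + C_op u g k k')"
  unfolding C_op_def by (simp add: sum.distrib sum_distrib_left algebra_simps)

lemma inner_HS_C_op:
  fixes u :: "'k::finite \<Rightarrow> 'l::finite \<Rightarrow> complex"
  assumes cols: "\<And>l l'. (\<Sum>k\<in>UNIV. cnj (u k l) * u k l') = (if l = l' then 1 else 0)"
  shows "inner_HS (C_op u f) (C_op u g) = inner_u u f g"
proof -
  have row: "(\<Sum>k'\<in>UNIV. C_op u f k k' * cnj (C_op u g k k'))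
      = (\<Sum>l\<in>UNIV. f k l * cnj (g k l) * complex_of_real ((cmod (u k l))\<^sup>2))" for k
  proof -
    have "(\<Sum>k'\<in>UNIV. C_op u f k k' * cnj (C_op u g k k'))
      = (\<Sum>k'\<in>UNIV. \<Sum>l'\<in>UNIV. \<Sum>l\<in>UNIV.
           (u k l * f k l * cnj (u k l') * cnj (g k l')) * (cnj (u k' l) * u k' l'))"
      unfolding C_op_def by (simp add: sum_distrib_left sum_distrib_right mult_ac)
    also have "\<dots> = (\<Sum>l'\<in>UNIV. \<Sum>l\<in>UNIV.
           (u k l * f k l * cnj (u k l') * cnj (g k l')) * (\<Sum>k'\<in>UNIV. cnj (u k' l) * u k' l'))"
      by (subst sum_rotate3) (simp only: sum_distrib_left)
    also have "\<dots> = (\<Sum>l\<in>UNIV. u k l * f k l * cnj (u k l) * cnj (g k l))"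
      by (simp add: cols if_distrib cong: if_cong)
    also have "\<dots> = (\<Sum>l\<in>UNIV. f k l * cnj (g k l) * complex_of_real ((cmod (u k l))\<^sup>2))"
      by (simp add: complex_mult_cnj cmod_power2 mult_ac)
    finally show ?thesis .
  qed
  show ?thesis
    unfolding inner_HS_def inner_u_def by (simp add: row)
qed

lemma bij_C_op:
  fixes u :: "'k::finite \<Rightarrow> 'l::finite \<Rightarrow> complex"
  assumes "unitary_mat u" and nonzero: "\<And>k l. u k l \<noteq> 0"
  shows "bij (C_op u)"
proof -
  have rows: "\<And>k k'. (\<Sum>l\<in>UNIV. u k l * cnj (u k' l)) = (if k = k' then 1 else 0)"
    and cols: "\<And>l l'. (\<Sum>k\<in>UNIV. cnj (u k l) * u k l') = (if l = l' then 1 else 0)"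
    using assms(1) unfolding unitary_mat_def by blast+
  define C_inv where "C_inv = (\<lambda>X k l. (\<Sum>k'\<in>UNIV. X k k' * u k' l) / u k l)"
  have "C_inv (C_op u f) k l = f k l" for f k l
  proof -
    have "(\<Sum>k'\<in>UNIV. C_op u f k k' * u k' l)
        = (\<Sum>l'\<in>UNIV. (u k l' * f k l') * (\<Sum>k'\<in>UNIV. cnj (u k' l') * u k' l))"
      unfolding C_op_def
      by (simp add: sum_distrib_right sum_distrib_left mult_ac)
         (subst sum.swap, simp only: sum_distrib_left)
    also have "\<dots> = u k l * f k l"
      by (simp only: cols sum_mult_delta)
    finally show ?thesis
      unfolding C_inv_def using nonzero[of k l] by simp
  qed
  moreover have "C_op u (C_inv X) k k' = X k k'" for X k k'
  proof -
    have "C_op u (C_inv X) k k' = (\<Sum>l\<in>UNIV. (\<Sum>j\<in>UNIV. X k j * u j l) * cnj (u k' l))"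
      unfolding C_op_def C_inv_def using nonzero by (simp add: mult.assoc)
    also have "\<dots> = (\<Sum>l\<in>UNIV. \<Sum>j\<in>UNIV. X k j * (u j l * cnj (u k' l)))"
      by (simp add: sum_distrib_left sum_distrib_right mult_ac)
    also have "\<dots> = (\<Sum>j\<in>UNIV. X k j * (\<Sum>l\<in>UNIV. u j l * cnj (u k' l)))"
      by (subst sum.swap) (simp only: sum_distrib_left)
    also have "\<dots> = X k k'"
      by (simp only: rows sum_mult_delta)
    finally show ?thesis .
  qed
  ultimately show ?thesis
    by (intro o_bij[where g = C_inv]) (simp_all add: fun_eq_iff)
qed

lemma unitary_iso_C_op:
  fixes u :: "'k::finite \<Rightarrow> 'l::finite \<Rightarrow> complex"
  assumes "unitary_mat u" and "\<And>k l. u k l \<noteq> 0"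
  shows "unitary_iso (C_op u) (inner_u u) inner_HS"
  using assms C_op_linear bij_C_op inner_HS_C_op
  unfolding unitary_iso_def unitary_mat_def by blast

theorem proposition2p1:
  fixes u :: "'k::finite \<Rightarrow> 'l::finite \<Rightarrow> complex"
  assumes "card (UNIV :: 'k set) = card (UNIV :: 'l set)"
    and "unitary_mat u"
    and "\<forall>k l. u k l \<noteq> 0"
  shows "unitary_iso (C_op u) (inner_u u) inner_HS \<and> unitary_iso (D_op u) (inner_u u) inner_HS"
proof
  show "unitary_iso (C_op u) (inner_u u) inner_HS"
    using assms(2,3) by (simp add: unitary_iso_C_op)
  have "unitary_iso (C_op (\<lambda>k l. cnj (u k l))) (inner_u u) inner_HS"
    using unitary_iso_C_op[OF unitary_mat_cnj[OF assms(2)]] assms(3) by (simp add: inner_u_cnj)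
  then show "unitary_iso (D_op u) (inner_u u) inner_HS"
    using unitary_iso_transpose by (simp add: D_op_eq_transpose_C_op[abs_def])
qed

end
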